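(* For all $k\ge1$, $n\ge0$, $$b_k(n)=\sum_{\substack{n_1+\cdots+n_k=n\\ n_i\ge0}}\binom{2n}{2n_1\ 2n_2\ \cdots\ 2n_k}.$$
   Context: A labeled graph on a set $V$ of $k$ vertices with $n$ edges has $n$ directed edges labeled $1,\dots,n$, edge $i$ being an ordered pair of vertices in $V\times V$ (loops and multiple edges allowed). The degree of a vertex is the number of edges having it as initial or terminal point, a loop counted twice. The graph is balanced if every vertex has even degree; $b_k(n)$ is the number of balanced labeled graphs on $k$ (fixed, labeled) vertices with $n$ edges. $\binom{2n}{a_1\ \cdots\ a_k}$ denotes the multinomial coefficient. *)

theory Defs
  imports Main "HOL-Library.FuncSet"
begin

text \<open>Vertices are {0..<k}; edges are labeled 0..<n (standing for 1..n).
A labeled graph is an assignment of an ordered pair of vertices to each edge label.\<close>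

definition labeled_graphs :: "nat \<Rightarrow> nat \<Rightarrow> (nat \<Rightarrow> nat \<times> nat) set" where
  "labeled_graphs k n = {0..<n} \<rightarrow>\<^sub>E ({0..<k} \<times> {0..<k})"

text \<open>Degree: number of edges having v as initial point plus number having v as
terminal point (so a loop is counted twice).\<close>
definition degree :: "nat \<Rightarrow> (nat \<Rightarrow> nat \<times> nat) \<Rightarrow> nat \<Rightarrow> nat" where
  "degree n G v = card {i \<in> {0..<n}. fst (G i) = v} + card {i \<in> {0..<n}. snd (G i) = v}"

definition balanced :: "nat \<Rightarrow> nat \<Rightarrow> (nat \<Rightarrow> nat \<times> nat) \<Rightarrow> bool" where
  "balanced k n G \<longleftrightarrow> (\<forall>v \<in> {0..<k}. even (degree n G v))"

definition b :: "nat \<Rightarrow> nat \<Rightarrow> nat" where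
  "b k n = card {G \<in> labeled_graphs k n. balanced k n G}"

definition multinomial :: "nat \<Rightarrow> nat \<Rightarrow> (nat \<Rightarrow> nat) \<Rightarrow> nat" where
  "multinomial m k a = fact m div (\<Prod>i<k. fact (a i))"

definition compositions :: "nat \<Rightarrow> nat \<Rightarrow> (nat \<Rightarrow> nat) set" where
  "compositions k n = {c \<in> {0..<k} \<rightarrow>\<^sub>E {0..n}. (\<Sum>i<k. c i) = n}"

end

theory Submission
  imports Defs "HOL-Combinatorics.Multiset_Permutations"
begin

text \<open>List the endpoints of the edges in label order, tail before head: a labeled graph
becomes a word of length 2n over the vertices, and the degree of v is the number of
occurrences of v in it. So balanced graphs correspond to words in which every letter occurs
an even number of times. Grouping these words by their letter counts (2n_1, ..., 2n_k), the
class of a fixed count vector consists of the arrangements of a multiset, of which there are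
exactly the multinomial coefficient many.\<close>

definition endpoint_word :: "nat \<Rightarrow> (nat \<Rightarrow> nat \<times> nat) \<Rightarrow> nat list" where
  "endpoint_word n G =
     map (\<lambda>j. if even j then fst (G (j div 2)) else snd (G (j div 2))) [0..<2 * n]"

definition graph_of_word :: "nat \<Rightarrow> nat list \<Rightarrow> nat \<Rightarrow> nat \<times> nat" where
  "graph_of_word n xs = (\<lambda>i. if i < n then (xs ! (2 * i), xs ! (2 * i + 1)) else undefined)"

lemma length_endpoint_word [simp]: "length (endpoint_word n G) = 2 * n"
  by (simp add: endpoint_word_def)

lemma endpoint_word_graph_of_word:
  "length xs = 2 * n \<Longrightarrow> endpoint_word n (graph_of_word n xs) = xs"
  unfolding endpoint_word_def graph_of_word_def
  by (rule nth_equalityI) (auto elim!: evenE oddE)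

lemma graph_of_word_endpoint_word:
  "G \<in> labeled_graphs k n \<Longrightarrow> graph_of_word n (endpoint_word n G) = G"
  unfolding endpoint_word_def graph_of_word_def labeled_graphs_def
  by (rule ext) (auto simp: PiE_def extensional_def)

lemma count_endpoint_word: "count (mset (endpoint_word n G)) v = degree n G v"
proof -
  let ?tails = "{i \<in> {0..<n}. fst (G i) = v}" and ?heads = "{i \<in> {0..<n}. snd (G i) = v}"
  have "count (mset (endpoint_word n G)) v = card {j. j < 2 * n \<and> endpoint_word n G ! j = v}"
    by (simp add: count_mset count_list_eq_length_filter length_filter_conv_card eq_commute)
  also have "{j. j < 2 * n \<and> endpoint_word n G ! j = v} =
      (\<lambda>i. 2 * i) ` ?tails \<union> (\<lambda>i. 2 * i + 1) ` ?heads"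
  proof (intro set_eqI iffI)
    fix j assume "j \<in> {j. j < 2 * n \<and> endpoint_word n G ! j = v}"
    then show "j \<in> (\<lambda>i. 2 * i) ` ?tails \<union> (\<lambda>i. 2 * i + 1) ` ?heads"
      by (cases "even j") (auto elim!: evenE oddE simp: endpoint_word_def image_iff)
  qed (auto simp: endpoint_word_def)
  also have "card \<dots> = card ?tails + card ?heads"
    by (subst card_Un_disjoint) (auto simp: card_image inj_on_def; presburger)+
  finally show ?thesis
    by (simp add: degree_def)
qed

definition even_words :: "nat \<Rightarrow> nat \<Rightarrow> nat list set" where
  "even_words k m =
     {xs. length xs = m \<and> set xs \<subseteq> {0..<k} \<and> (\<forall>v<k. even (count (mset xs) v))}"

lemma bij_betw_endpoint_word:
  "bij_betw (endpoint_word n) {G \<in> labeled_graphs k n. balanced k n G} (even_words k (2 * n))"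
proof (rule bij_betwI[where g = "graph_of_word n"])
  show "endpoint_word n \<in> {G \<in> labeled_graphs k n. balanced k n G} \<rightarrow> even_words k (2 * n)"
  proof
    fix G assume G: "G \<in> {G \<in> labeled_graphs k n. balanced k n G}"
    then have "set (endpoint_word n G) \<subseteq> {0..<k}"
      by (auto simp: endpoint_word_def labeled_graphs_def PiE_def Pi_def mem_Times_iff)
    with G show "endpoint_word n G \<in> even_words k (2 * n)"
      by (simp add: even_words_def count_endpoint_word balanced_def)
  qed
  show "graph_of_word n \<in> even_words k (2 * n) \<rightarrow> {G \<in> labeled_graphs k n. balanced k n G}"
  proof
    fix xs assume xs: "xs \<in> even_words k (2 * n)"
    then have "xs ! j < k" if "j < 2 * n" for j
      using that nth_mem[of j xs] by (auto simp: even_words_def subset_iff)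
    then have "graph_of_word n xs \<in> labeled_graphs k n"
      by (auto simp: labeled_graphs_def graph_of_word_def extensional_def)
    moreover have "balanced k n (graph_of_word n xs)"
      using xs endpoint_word_graph_of_word[of xs n] count_endpoint_word[of n "graph_of_word n xs"]
      by (auto simp: even_words_def balanced_def)
    ultimately show "graph_of_word n xs \<in> {G \<in> labeled_graphs k n. balanced k n G}"
      by simp
  qed
qed (auto simp: graph_of_word_endpoint_word endpoint_word_graph_of_word even_words_def)

lemma b_eq_card_even_words: "b k n = card (even_words k (2 * n))"
  unfolding b_def by (rule bij_betw_same_card[OF bij_betw_endpoint_word])

definition mset_of_counts :: "nat \<Rightarrow> (nat \<Rightarrow> nat) \<Rightarrow> nat multiset" where
  "mset_of_counts k a = (\<Sum>i<k. replicate_mset (a i) i)"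

lemma count_mset_of_counts: "count (mset_of_counts k a) v = (if v < k then a v else 0)"
  by (simp add: mset_of_counts_def count_sum)

lemma size_mset_of_counts: "size (mset_of_counts k a) = (\<Sum>i<k. a i)"
  by (simp add: mset_of_counts_def)

lemma set_mset_of_counts_subset: "set_mset (mset_of_counts k a) \<subseteq> {..<k}"
  by (auto simp: count_mset_of_counts simp flip: count_greater_zero_iff split: if_splits)

lemma mset_of_counts_count:
  assumes "set_mset A \<subseteq> {..<k}"
  shows "mset_of_counts k (count A) = A"
  using assms by (intro multiset_eqI) (auto simp: count_mset_of_counts not_in_iff)

lemma mset_of_counts_eq_iff:
  "mset_of_counts k a = mset_of_counts k a' \<longleftrightarrow> (\<forall>i<k. a i = a' i)"
  by (metis count_mset_of_counts multiset_eqI)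

lemma card_permutations_mset_of_counts:
  "card (permutations_of_multiset (mset_of_counts k a)) = multinomial (\<Sum>i<k. a i) k a"
proof -
  have "(\<Prod>v\<in>set_mset (mset_of_counts k a). fact (count (mset_of_counts k a) v)) =
        (\<Prod>i<k. fact (a i) :: nat)"
    by (rule prod.mono_neutral_cong_left[OF _ set_mset_of_counts_subset])
       (auto simp: count_mset_of_counts simp flip: count_greater_zero_iff)
  then show ?thesis
    by (simp add: card_permutations_of_multiset(1) size_mset_of_counts multinomial_def)
qed

lemma size_mset_of_doubled_counts: "size (mset_of_counts k (\<lambda>i. 2 * c i)) = 2 * (\<Sum>i<k. c i)"
  by (simp add: size_mset_of_counts sum_distrib_left)

lemma even_words_eq_UN:
  "even_words k (2 * n) =
     (\<Union>c\<in>compositions k n. permutations_of_multiset (mset_of_counts k (\<lambda>i. 2 * c i)))"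
proof (intro set_eqI iffI)
  fix xs assume xs: "xs \<in> even_words k (2 * n)"
  define c where "c = restrict (\<lambda>i. count (mset xs) i div 2) {0..<k}"
  have counts: "count (mset xs) i = 2 * c i" if "i < k" for i
    using xs that by (simp add: even_words_def c_def)
  have "mset xs = mset_of_counts k (count (mset xs))"
    using xs by (intro mset_of_counts_count[symmetric]) (auto simp: even_words_def)
  also have "\<dots> = mset_of_counts k (\<lambda>i. 2 * c i)"
    unfolding mset_of_counts_def by (intro sum.cong) (simp_all add: counts)
  finally have xs_eq: "mset xs = mset_of_counts k (\<lambda>i. 2 * c i)" .
  have "2 * n = 2 * (\<Sum>i<k. c i)"
    using xs size_mset_of_doubled_counts[of k c] by (simp add: even_words_def flip: xs_eq)
  then have sum_c: "(\<Sum>i<k. c i) = n"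
    by simp
  have "c i \<le> n" if "i < k" for i
    using that member_le_sum[of i "{..<k}" c] sum_c by simp
  then have "c \<in> compositions k n"
    using sum_c by (auto simp: compositions_def c_def lessThan_atLeast0)
  with xs_eq show
    "xs \<in> (\<Union>c\<in>compositions k n. permutations_of_multiset (mset_of_counts k (\<lambda>i. 2 * c i)))"
    by (auto intro: permutations_of_multisetI)
next
  fix xs
  assume "xs \<in> (\<Union>c\<in>compositions k n. permutations_of_multiset (mset_of_counts k (\<lambda>i. 2 * c i)))"
  then obtain c where c: "c \<in> compositions k n"
    and xs_eq: "mset xs = mset_of_counts k (\<lambda>i. 2 * c i)"
    by (auto dest: permutations_of_multisetD)
  have "length xs = 2 * n"
    using c size_mset_of_doubled_counts[of k c]
    by (simp add: compositions_def lessThan_atLeast0 flip: xs_eq)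
  moreover have "set xs \<subseteq> {0..<k}"
    using set_mset_of_counts_subset[of k "\<lambda>i. 2 * c i"]
    by (simp add: lessThan_atLeast0 flip: set_mset_mset xs_eq)
  ultimately show "xs \<in> even_words k (2 * n)"
    using xs_eq by (simp add: even_words_def count_mset_of_counts)
qed

lemma finite_compositions: "finite (compositions k n)"
  unfolding compositions_def
  by (rule finite_subset[of _ "{0..<k} \<rightarrow>\<^sub>E {0..n}"]) (auto intro: finite_PiE)

lemma inj_on_doubled_compositions:
  "inj_on (\<lambda>c. mset_of_counts k (\<lambda>i. 2 * c i)) (compositions k n)"
proof (rule inj_onI)
  fix c d assume "c \<in> compositions k n" "d \<in> compositions k n"
    and "mset_of_counts k (\<lambda>i. 2 * c i) = mset_of_counts k (\<lambda>i. 2 * d i)"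
  then show "c = d"
    by (intro extensionalityI[of _ "{0..<k}"])
       (auto simp: compositions_def mset_of_counts_eq_iff PiE_iff)
qed

theorem mainTheorem13:
  fixes k n :: nat
  assumes "k \<ge> 1"
  shows "b k n = (\<Sum>c \<in> compositions k n. multinomial (2 * n) k (\<lambda>i. 2 * c i))"
proof -
  let ?P = "\<lambda>c. permutations_of_multiset (mset_of_counts k (\<lambda>i. 2 * c i))"
  have disjoint: "?P c \<inter> ?P d = {}"
    if "c \<in> compositions k n" "d \<in> compositions k n" "c \<noteq> d" for c d
    using inj_onD[OF inj_on_doubled_compositions _ that(1,2)] that(3)
    by (auto simp: permutations_of_multiset_def)
  have "b k n = card (\<Union>c\<in>compositions k n. ?P c)"
    by (simp add: b_eq_card_even_words even_words_eq_UN)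
  also have "\<dots> = (\<Sum>c\<in>compositions k n. card (?P c))"
    by (rule card_UN_disjoint[OF finite_compositions]) (auto simp: disjoint)
  also have "\<dots> = (\<Sum>c \<in> compositions k n. multinomial (2 * n) k (\<lambda>i. 2 * c i))"
    by (rule sum.cong) (auto simp: card_permutations_mset_of_counts compositions_def
        lessThan_atLeast0 simp flip: sum_distrib_left)
  finally show ?thesis .
qed

end
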